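(* Let $a\ge0$ and let $B\subset\mathcal{L}^+_a$ be compact with respect to the topology of uniform convergence on compact subsets of $\mathbb{C}$. If $B$ does not contain the function $f\equiv0$, then $B$ is compact in $\mathcal{A}_a$.
   Context: For $b>0$, $\|f\|_b=\sup_{k\in\mathbb{N}_0}b^{-k}|f^{(k)}(0)|$; $\mathcal{A}_a=\{f\text{ entire}:\|f\|_b<\infty\ \forall b>a\}$ with topology generated by $\{\|\cdot\|_b:b>a\}$. $\mathcal{L}^+$ is the set of entire functions $Cz^le^{\alpha z}\prod_{j\ge1}(1+\beta_jz)$ with $C\in\mathbb{C}$, $l\in\mathbb{N}_0$, $\alpha\ge0$, $\beta_j\ge\beta_{j+1}\ge0$, $\sum_j\beta_j<\infty$; $\mathcal{L}^+_a=\mathcal{L}^+\cap\mathcal{A}_a$. *)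

theory Defs
  imports "HOL-Analysis.Analysis"
begin

definition normb :: "real \<Rightarrow> (complex \<Rightarrow> complex) \<Rightarrow> ereal" where
  "normb b f = (SUP k::nat. ereal (cmod ((deriv ^^ k) f 0) / b ^ k))"

definition A_space :: "real \<Rightarrow> (complex \<Rightarrow> complex) set" where
  "A_space a = {f. f holomorphic_on UNIV \<and> (\<forall>b>a. normb b f < \<infinity>)}"

definition A_topology :: "real \<Rightarrow> (complex \<Rightarrow> complex) topology" where
  "A_topology a = topology_generated_by
     {{g \<in> A_space a. normb b (\<lambda>z. g z - f z) < ereal r} | f b r.
        f \<in> A_space a \<and> b > a \<and> r > 0}"

definition LU_topology :: "(complex \<Rightarrow> complex) topology" where
  "LU_topology = topology_generated_by
     {{g. g holomorphic_on UNIV \<and> (\<forall>z\<in>K. cmod (g z - f z) < r)} | f K r.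
        f holomorphic_on UNIV \<and> compact K \<and> r > 0}"

definition Lplus :: "(complex \<Rightarrow> complex) set" where
  "Lplus = {f. \<exists>(C::complex) (l::nat) (\<alpha>::real) (\<beta>::nat \<Rightarrow> real).
      \<alpha> \<ge> 0 \<and> (\<forall>j. \<beta> j \<ge> 0) \<and> (\<forall>j. \<beta> (Suc j) \<le> \<beta> j) \<and> summable \<beta> \<and>
      (\<forall>z. f z = C * z ^ l * exp (complex_of_real \<alpha> * z) *
                   (\<Prod>j. 1 + complex_of_real (\<beta> j) * z))}"

definition Lplus_a :: "real \<Rightarrow> (complex \<Rightarrow> complex) set" where
  "Lplus_a a = Lplus \<inter> A_space a"

end

theory Submission
  imports Defs "HOL-Complex_Analysis.Complex_Analysis"
begin

text \<open>The identity map from \<open>B\<close>, with the topology of locally uniform convergence, to \<open>A_a\<close> is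
  continuous, so compactness carries over. For \<open>h \<in> L\<^sup>+\<close>, \<open>ln |h|\<close> is concave on the positive
  axis and \<open>|h z| \<le> |h |z||\<close>; hence an estimate \<open>|h r1| \<le> exp (c (r1 - 1)) |h 1|\<close> propagates
  to \<open>|h z| \<le> K exp (c |z|)\<close> on all of \<open>\<complex>\<close>. For \<open>g0 \<in> B\<close> of exponential type \<open>b1 < c\<close> this
  estimate holds with room to spare at a large radius \<open>r1\<close> (here \<open>g0 \<noteq> 0\<close> is used), so it
  holds uniformly for all \<open>h \<in> L\<^sup>+\<close> close to \<open>g0\<close> on the disc of radius \<open>r1\<close>. Cauchy's estimates
  then make the seminorm \<open>\<parallel>h - g0\<parallel>\<^sub>b\<close> small for \<open>b > c\<close>: finitely many Taylor coefficients are
  controlled by closeness on the unit disc, the remaining ones by the common exponential bound.\<close>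

section \<open>Taylor coefficients and exponential growth\<close>

lemma normb_le_ereal_iff:
  "normb b f \<le> ereal d \<longleftrightarrow> (\<forall>k. cmod ((deriv ^^ k) f 0) / b ^ k \<le> d)"
  unfolding normb_def by (simp add: SUP_le_iff)

lemma normb_finite_imp_higher_deriv_le:
  assumes "normb b f < \<infinity>" "b > 0"
  obtains N where "N > 0" "\<And>k. cmod ((deriv ^^ k) f 0) \<le> N * b ^ k"
proof -
  obtain d where "normb b f \<le> ereal d"
    using ereal_dense2[OF assms(1)] by (blast intro: less_imp_le)
  then have "cmod ((deriv ^^ k) f 0) / b ^ k \<le> max d 1" for k
    by (simp add: normb_le_ereal_iff le_max_iff_disj)
  then have "cmod ((deriv ^^ k) f 0) \<le> max d 1 * b ^ k" for k
    using assms(2) by (simp add: divide_le_eq)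
  then show ?thesis
    using that[of "max d 1"] by simp
qed

lemma normb_diff_triangle:
  assumes "f holomorphic_on UNIV" "g holomorphic_on UNIV" "h holomorphic_on UNIV" "b > 0"
  shows "normb b (\<lambda>z. f z - h z) \<le> normb b (\<lambda>z. f z - g z) + normb b (\<lambda>z. g z - h z)"
proof -
  let ?c = "\<lambda>u k. ereal (cmod ((deriv ^^ k) u 0) / b ^ k)"
  have "?c (\<lambda>z. f z - h z) k \<le> ?c (\<lambda>z. f z - g z) k + ?c (\<lambda>z. g z - h z) k" for k
  proof -
    have "(deriv ^^ k) (\<lambda>z. f z - h z) 0 =
          (deriv ^^ k) (\<lambda>z. f z - g z) 0 + (deriv ^^ k) (\<lambda>z. g z - h z) 0"
      using assms by (simp add: higher_deriv_diff)
    then show ?thesis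
      using assms(4) by (simp add: norm_triangle_ineq add_divide_distrib[symmetric] divide_right_mono)
  qed
  also have "\<dots> k \<le> (SUP k. ?c (\<lambda>z. f z - g z) k) + (SUP k. ?c (\<lambda>z. g z - h z) k)" for k
    by (intro add_mono SUP_upper) auto
  finally show ?thesis
    unfolding normb_def by (intro SUP_least)
qed

lemma norm_le_exp_of_higher_deriv_le:
  assumes "f holomorphic_on UNIV" "c \<ge> 0" "\<And>k. cmod ((deriv ^^ k) f 0) \<le> N * c ^ k"
  shows "cmod (f z) \<le> N * exp (c * cmod z)"
proof -
  have taylor: "(\<lambda>n. (deriv ^^ n) f 0 / fact n * z ^ n) sums f z"
    using holomorphic_power_series[of f 0 "cmod z + 1" z] assms(1)
    by (auto intro: holomorphic_on_subset)
  have exp: "(\<lambda>n. N * ((c * cmod z) ^ n /\<^sub>R fact n)) sums (N * exp (c * cmod z))"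
    by (rule sums_mult[OF exp_converges])
  have "cmod ((deriv ^^ n) f 0 / fact n * z ^ n) = cmod ((deriv ^^ n) f 0) * cmod z ^ n / fact n" for n
    by (simp add: norm_mult norm_divide norm_power)
  also have "\<dots> n \<le> N * c ^ n * cmod z ^ n / fact n" for n
    using assms(3)[of n] by (intro divide_right_mono mult_right_mono) auto
  also have "\<dots> n = N * ((c * cmod z) ^ n /\<^sub>R fact n)" for n
    by (simp add: power_mult_distrib divide_inverse mult_ac)
  finally have terms: "cmod ((deriv ^^ n) f 0 / fact n * z ^ n) \<le> N * ((c * cmod z) ^ n /\<^sub>R fact n)" for n .
  have "cmod (f z) = cmod (\<Sum>n. (deriv ^^ n) f 0 / fact n * z ^ n)"
    using sums_unique[OF taylor] by simp
  also have "\<dots> \<le> (\<Sum>n. N * ((c * cmod z) ^ n /\<^sub>R fact n))"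
    using terms exp by (intro norm_suminf_le) (auto simp: sums_iff)
  finally show ?thesis
    using sums_unique[OF exp] by simp
qed

lemma fact_le_pow_mult_exp:
  assumes "k \<ge> 1"
  shows "fact k \<le> real k ^ (k + 1) * exp (1 - real k)"
  using assms
proof (induction k rule: dec_induct)
  case base
  then show ?case by simp
next
  case (step k)
  have "(1 - 1 / real (k + 1)) ^ (k + 1) \<le> exp (- 1)"
    using exp_ge_one_minus_x_over_n_power_n[of 1 "k + 1"] by simp
  moreover have "1 - 1 / real (k + 1) = real k / (real k + 1)"
    by (simp add: field_simps)
  ultimately have "real k ^ (k + 1) \<le> (real k + 1) ^ (k + 1) * exp (- 1)"
    by (simp add: power_divide divide_le_eq mult_ac)
  have "fact (Suc k) = (real k + 1) * fact k"
    by simp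
  also have "\<dots> \<le> (real k + 1) * (real k ^ (k + 1) * exp (1 - real k))"
    using step.IH by (intro mult_left_mono) auto
  also have "\<dots> \<le> (real k + 1) * ((real k + 1) ^ (k + 1) * exp (- 1) * exp (1 - real k))"
    using \<open>real k ^ (k + 1) \<le> _\<close> by (intro mult_left_mono mult_right_mono) auto
  also have "\<dots> = real (Suc k) ^ (Suc k + 1) * exp (1 - real (Suc k))"
    by (simp add: mult.assoc add.commute flip: exp_add)
  finally show ?case .
qed

text \<open>Cauchy's estimate on the circle of the optimal radius \<open>k / c\<close>, combined with the
  Stirling-type bound above.\<close>
lemma higher_deriv_le_of_exponential_growth:
  assumes "f holomorphic_on UNIV" "c > 0" "\<And>z. cmod (f z) \<le> M * exp (c * cmod z)" "k \<ge> 1"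
  shows "cmod ((deriv ^^ k) f 0) \<le> M * exp 1 * real k * c ^ k"
proof -
  define \<rho> where "\<rho> = real k / c"
  have "\<rho> > 0"
    using assms(2,4) unfolding \<rho>_def by auto
  have "M \<ge> 0"
    using order_trans[OF norm_ge_zero assms(3)[of 0]] by simp
  have "cmod ((deriv ^^ k) f 0) \<le> fact k * (M * exp (c * \<rho>)) / \<rho> ^ k"
    by (rule Cauchy_inequality)
       (use assms \<open>\<rho> > 0\<close> in \<open>auto intro: holomorphic_on_subset holomorphic_on_imp_continuous_on\<close>)
  also have "\<dots> = fact k * M * exp (real k) * c ^ k / real k ^ k"
    using assms(2) by (simp add: \<rho>_def power_divide)
  also have "\<dots> \<le> real k ^ (k + 1) * exp (1 - real k) * M * exp (real k) * c ^ k / real k ^ k"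
    using fact_le_pow_mult_exp[OF assms(4)] assms(2) \<open>M \<ge> 0\<close>
    by (intro divide_right_mono mult_right_mono) auto
  also have "\<dots> = M * exp 1 * real k * c ^ k"
    using assms(4) by (simp add: field_simps mult_exp_exp)
  finally show ?thesis .
qed

section \<open>Log-concavity of the class \<open>L\<^sup>+\<close> on the positive axis\<close>

lemma concave_on_eq:
  assumes "concave_on S f" "\<And>x. x \<in> S \<Longrightarrow> f x = g x"
  shows "concave_on S g"
  using assms by (auto simp: concave_on_iff convex_def)

lemma concave_on_suminf:
  assumes "\<And>j. concave_on S (f j)" "\<And>x. x \<in> S \<Longrightarrow> summable (\<lambda>j. f j x)"
  shows "concave_on S (\<lambda>x. \<Sum>j. f j x)"
proof -
  have "convex S"
    using assms(1)[of 0] by (rule concave_on_imp_convex)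
  moreover have "u * (\<Sum>j. f j x) + v * (\<Sum>j. f j y) \<le> (\<Sum>j. f j (u *\<^sub>R x + v *\<^sub>R y))"
    if "x \<in> S" "y \<in> S" "u \<ge> 0" "v \<ge> 0" "u + v = 1" for x y u v
  proof -
    have "u * (\<Sum>j. f j x) + v * (\<Sum>j. f j y) = (\<Sum>j. u * f j x + v * f j y)"
      using assms(2) that
      by (simp add: suminf_add summable_mult flip: suminf_mult)
    also have "\<dots> \<le> (\<Sum>j. f j (u *\<^sub>R x + v *\<^sub>R y))"
      using that assms convexD[OF \<open>convex S\<close>]
      by (intro suminf_le) (auto simp: concave_on_iff intro!: summable_add summable_mult)
    finally show ?thesis .
  qed
  ultimately show ?thesis
    by (simp add: concave_on_iff)
qed

lemma concave_on_ln_one_plus_mult: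
  assumes "c \<ge> 0"
  shows "concave_on {0<..} (\<lambda>s. ln (1 + c * s))"
proof -
  have "u * ln (1 + c * x) + v * ln (1 + c * y) \<le> ln (1 + c * (u * x + v * y))"
    if "x > 0" "y > 0" "u \<ge> 0" "v \<ge> 0" "u + v = 1" for x y u v :: real
  proof -
    have "u * ln (1 + c * x) + v * ln (1 + c * y) \<le> ln (u * (1 + c * x) + v * (1 + c * y))"
      using ln_concave that assms by (simp add: concave_on_iff add_pos_nonneg)
    also have "u * (1 + c * x) + v * (1 + c * y) = 1 + c * (u * x + v * y)"
      using that(5) by (simp add: algebra_simps flip: distrib_right)
    finally show ?thesis .
  qed
  then show ?thesis
    by (simp add: concave_on_iff convex_real_interval)
qed

lemma convergent_prod_one_plus_nonneg_mult:
  fixes \<beta> :: "nat \<Rightarrow> real"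
  assumes "\<And>j. \<beta> j \<ge> 0" "summable \<beta>" "s \<ge> 0"
  shows "convergent_prod (\<lambda>j. 1 + \<beta> j * s)" "(\<Prod>j. 1 + \<beta> j * s) \<ge> 1"
proof -
  have "\<beta> j * s \<noteq> -1" for j
    using mult_nonneg_nonneg[OF assms(1)[of j] assms(3)] by linarith
  then show conv: "convergent_prod (\<lambda>j. 1 + \<beta> j * s)"
    using assms by (intro summable_imp_convergent_prod_real) (auto simp: abs_mult summable_mult2)
  show "(\<Prod>j. 1 + \<beta> j * s) \<ge> 1"
    using assms by (intro prodinf_nonneg[OF convergent_prod_has_prod[OF conv]]) auto
qed

lemma prodinf_one_plus_of_real_mult:
  fixes \<beta> :: "nat \<Rightarrow> real"
  assumes "\<And>j. \<beta> j \<ge> 0" "summable \<beta>" "s \<ge> 0"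
  shows "(\<Prod>j. 1 + of_real (\<beta> j) * of_real s) = complex_of_real (\<Prod>j. 1 + \<beta> j * s)"
proof -
  have "(\<lambda>j. complex_of_real (1 + \<beta> j * s)) has_prod complex_of_real (\<Prod>j. 1 + \<beta> j * s)"
    using convergent_prod_has_prod[OF convergent_prod_one_plus_nonneg_mult(1)[OF assms]]
    by (simp only: has_prod_of_real_iff)
  then show ?thesis
    by (simp add: has_prod_iff)
qed

lemma norm_prodinf_one_plus_le:
  fixes \<beta> :: "nat \<Rightarrow> real"
  assumes "\<And>j. \<beta> j \<ge> 0" "summable \<beta>"
  shows "cmod (\<Prod>j. 1 + of_real (\<beta> j) * z) \<le> (\<Prod>j. 1 + \<beta> j * cmod z)"
proof -
  have "summable (\<lambda>j. cmod (1 + of_real (\<beta> j) * z - 1))"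
    using assms by (simp add: norm_mult summable_mult2)
  then have "(\<lambda>j. 1 + of_real (\<beta> j) * z) has_prod (\<Prod>j. 1 + of_real (\<beta> j) * z)"
    by (intro convergent_prod_has_prod abs_convergent_prod_imp_convergent_prod
        summable_imp_abs_convergent_prod)
  then have "(\<lambda>j. cmod (1 + of_real (\<beta> j) * z)) has_prod cmod (\<Prod>j. 1 + of_real (\<beta> j) * z)"
    by (rule has_prod_norm)
  moreover have "cmod (1 + of_real (\<beta> j) * z) \<le> 1 + \<beta> j * cmod z" for j
    using norm_triangle_ineq[of 1 "of_real (\<beta> j) * z"] assms(1)[of j] by (simp add: norm_mult)
  ultimately show ?thesis
    using convergent_prod_one_plus_nonneg_mult(1)[OF assms norm_ge_zero]
    by (intro has_prod_le convergent_prod_has_prod) auto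
qed

lemma LplusE:
  assumes "h \<in> Lplus"
  obtains C l \<alpha> \<beta>
  where "\<And>z. h z = C * z ^ l * exp (of_real \<alpha> * z) * (\<Prod>j. 1 + of_real (\<beta> j) * z)"
    and "\<alpha> \<ge> 0" "\<And>j. \<beta> j \<ge> 0" "summable \<beta>"
proof -
  from assms obtain C l \<alpha> \<beta> where "\<alpha> \<ge> 0" "\<forall>j. \<beta> j \<ge> 0" "summable \<beta>"
    "\<forall>z. h z = C * z ^ l * exp (of_real \<alpha> * z) * (\<Prod>j. 1 + of_real (\<beta> j) * z)"
    unfolding Lplus_def by blast
  then show thesis
    using that by simp
qed

lemma Lplus_norm_of_real:
  assumes "\<And>z. h z = C * z ^ l * exp (of_real \<alpha> * z) * (\<Prod>j. 1 + of_real (\<beta> j) * z)"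
    and "\<And>j. \<beta> j \<ge> 0" "summable \<beta>" "s \<ge> 0"
  shows "cmod (h (of_real s)) = cmod C * s ^ l * exp (\<alpha> * s) * (\<Prod>j. 1 + \<beta> j * s)"
  using assms convergent_prod_one_plus_nonneg_mult(2)[OF assms(2-4)]
  by (simp add: prodinf_one_plus_of_real_mult norm_mult norm_power flip: exp_of_real)

lemma Lplus_norm_le_norm_of_real_norm:
  assumes "h \<in> Lplus"
  shows "cmod (h z) \<le> cmod (h (of_real (cmod z)))"
proof -
  obtain C l \<alpha> \<beta>
    where h: "\<And>z. h z = C * z ^ l * exp (of_real \<alpha> * z) * (\<Prod>j. 1 + of_real (\<beta> j) * z)"
      and \<alpha>: "\<alpha> \<ge> 0" and \<beta>: "\<And>j. \<beta> j \<ge> 0" "summable \<beta>"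
    by (rule LplusE[OF assms]) (rule that)
  have "exp (\<alpha> * Re z) \<le> exp (\<alpha> * cmod z)"
    using \<alpha> complex_Re_le_cmod[of z] by (simp add: mult_left_mono)
  then have "cmod (h z) \<le> cmod C * cmod z ^ l * exp (\<alpha> * cmod z) * (\<Prod>j. 1 + \<beta> j * cmod z)"
    using norm_prodinf_one_plus_le[OF \<beta>, of z]
    by (simp add: h norm_mult norm_power norm_exp_eq_Re mult_mono)
  also have "\<dots> = cmod (h (of_real (cmod z)))"
    by (simp add: Lplus_norm_of_real[OF h \<beta>])
  finally show ?thesis .
qed

lemma Lplus_nonzeroE:
  assumes "h \<in> Lplus" "h \<noteq> (\<lambda>z. 0)"
  obtains C l \<alpha> \<beta>
  where "\<And>z. h z = C * z ^ l * exp (of_real \<alpha> * z) * (\<Prod>j. 1 + of_real (\<beta> j) * z)"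
    and "C \<noteq> 0" "\<alpha> \<ge> 0" "\<And>j. \<beta> j \<ge> 0" "summable \<beta>"
proof -
  obtain C l \<alpha> \<beta>
    where h: "\<And>z. h z = C * z ^ l * exp (of_real \<alpha> * z) * (\<Prod>j. 1 + of_real (\<beta> j) * z)"
      and \<alpha>: "\<alpha> \<ge> 0" and \<beta>: "\<And>j. \<beta> j \<ge> 0" "summable \<beta>"
    by (rule LplusE[OF assms(1)]) (rule that)
  have "C \<noteq> 0"
  proof
    assume "C = 0"
    then have "h = (\<lambda>z. 0)"
      by (simp add: h fun_eq_iff)
    with assms(2) show False ..
  qed
  from h this \<alpha> \<beta> show thesis
    by (rule that)
qed

lemma Lplus_norm_of_real_pos:
  assumes "h \<in> Lplus" "h \<noteq> (\<lambda>z. 0)" "s > 0"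
  shows "cmod (h (of_real s)) > 0"
proof -
  obtain C l \<alpha> \<beta>
    where h: "\<And>z. h z = C * z ^ l * exp (of_real \<alpha> * z) * (\<Prod>j. 1 + of_real (\<beta> j) * z)"
      and "C \<noteq> 0" "\<alpha> \<ge> 0" and \<beta>: "\<And>j. \<beta> j \<ge> 0" "summable \<beta>"
    by (rule Lplus_nonzeroE[OF assms(1,2)]) (rule that)
  show ?thesis
    using \<open>C \<noteq> 0\<close> assms(3) convergent_prod_one_plus_nonneg_mult(2)[OF \<beta>, of s]
    by (simp add: Lplus_norm_of_real[OF h \<beta>])
qed

lemma Lplus_ln_norm_concave:
  assumes "h \<in> Lplus" "h \<noteq> (\<lambda>z. 0)"
  shows "concave_on {0<..} (\<lambda>s. ln (cmod (h (of_real s))))"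
proof -
  obtain C l \<alpha> \<beta>
    where h: "\<And>z. h z = C * z ^ l * exp (of_real \<alpha> * z) * (\<Prod>j. 1 + of_real (\<beta> j) * z)"
      and "C \<noteq> 0" and \<alpha>: "\<alpha> \<ge> 0" and \<beta>: "\<And>j. \<beta> j \<ge> 0" "summable \<beta>"
    by (rule Lplus_nonzeroE[OF assms]) (rule that)
  have factors_pos: "1 + \<beta> j * s > 0" if "s > 0" for j s
    using \<beta>(1)[of j] that by (simp add: add_pos_nonneg)
  have ln_h: "ln (cmod (h (of_real s))) =
      ln (cmod C) + real l * ln s + \<alpha> * s + (\<Sum>j. ln (1 + \<beta> j * s))" if "s > 0" for s
  proof -
    have "(\<Sum>j. ln (1 + \<beta> j * s)) = ln (\<Prod>j. 1 + \<beta> j * s)"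
      using convergent_prod_one_plus_nonneg_mult(1)[OF \<beta>, of s] factors_pos that
      by (intro suminf_ln_real) auto
    then show ?thesis
      using \<open>C \<noteq> 0\<close> that convergent_prod_one_plus_nonneg_mult(2)[OF \<beta>, of s]
      by (simp add: Lplus_norm_of_real[OF h \<beta>] ln_mult ln_realpow)
  qed
  have "summable (\<lambda>j. ln (1 + \<beta> j * s))" if "s > 0" for s
    using convergent_prod_one_plus_nonneg_mult(1)[OF \<beta>, of s] factors_pos that
    by (intro summable_ln_real) auto
  then have "concave_on {0<..}
      (\<lambda>s. ln (cmod C) + real l * ln s + \<alpha> * s + (\<Sum>j. ln (1 + \<beta> j * s)))"
    using \<alpha> \<beta>(1) ln_concave
    by (intro concave_on_add concave_on_cmul concave_on_suminf concave_on_ln_one_plus_mult)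
       (auto simp: concave_on_const concave_on_ident convex_real_interval)
  then show ?thesis
    by (rule concave_on_eq) (simp add: ln_h)
qed

text \<open>Concavity of \<open>ln |h|\<close> on the positive axis: the slope on \<open>[r1, r]\<close> is at most the
  slope on \<open>[1, r1]\<close>.\<close>
lemma Lplus_norm_of_real_le_exp:
  assumes "h \<in> Lplus" "h \<noteq> (\<lambda>z. 0)" "1 < r1" "r1 \<le> r"
    and "cmod (h (of_real r1)) \<le> exp (c * (r1 - 1)) * cmod (h 1)"
  shows "cmod (h (of_real r)) \<le> exp (c * (r - r1)) * cmod (h (of_real r1))"
proof -
  define f where "f s = ln (cmod (h (of_real s)))" for s
  have pos: "cmod (h (of_real s)) > 0" if "s > 0" for s
    using Lplus_norm_of_real_pos[OF assms(1,2) that] .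
  have "f r1 \<le> ln (exp (c * (r1 - 1)) * cmod (h 1))"
    unfolding f_def using assms(3,5) pos[of 1] pos[of r1] by simp
  also have "\<dots> = c * (r1 - 1) + f 1"
    using pos[of 1] by (simp add: f_def ln_mult)
  finally have "f r1 \<le> c * (r1 - 1) + f 1" .
  have "f r - f r1 \<le> c * (r - r1)"
  proof (cases "r = r1")
    case False
    have "convex_on {0<..} (\<lambda>s. - f s)"
      using Lplus_ln_norm_concave[OF assms(1,2)] unfolding f_def concave_on_def .
    then have "(f r1 - f 1) / (1 - r1) \<le> (f r - f r1) / (r1 - r)"
      using convex_on_slope_le[of "{0<..}" "\<lambda>s. - f s" 1 r r1] assms(3,4) False
      by (auto intro: order_trans)
    moreover have "(f r1 - f 1) / (1 - r1) = - ((f r1 - f 1) / (r1 - 1))"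
      "(f r - f r1) / (r1 - r) = - ((f r - f r1) / (r - r1))"
      by (metis divide_minus_right minus_diff_eq)+
    ultimately have "(f r - f r1) / (r - r1) \<le> (f r1 - f 1) / (r1 - 1)"
      by linarith
    also have "\<dots> \<le> c"
      using \<open>f r1 \<le> c * (r1 - 1) + f 1\<close> assms(3) by (simp add: pos_divide_le_eq)
    finally show ?thesis
      using assms(4) False by (simp add: pos_divide_le_eq)
  qed simp
  have "cmod (h (of_real r)) = exp (f r)"
    using pos[of r] assms(3,4) by (simp add: f_def)
  also have "\<dots> \<le> exp (c * (r - r1) + f r1)"
    using \<open>f r - f r1 \<le> c * (r - r1)\<close> by simp
  also have "\<dots> = exp (c * (r - r1)) * cmod (h (of_real r1))"
    using pos[of r1] assms(3) by (simp add: f_def exp_add)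
  finally show ?thesis .
qed

section \<open>Uniform exponential bounds near a function of \<open>L\<^sup>+\<close>\<close>

lemma Lplus_norm_le_of_disc_bound:
  assumes "h \<in> Lplus" "h 1 \<noteq> 0" "1 < R" "c \<ge> 0"
    and disc: "\<And>w. cmod w \<le> R \<Longrightarrow> cmod (h w) \<le> K"
    and ratio: "cmod (h (of_real R)) \<le> exp (c * (R - 1)) * cmod (h 1)"
  shows "cmod (h z) \<le> K * exp (c * cmod z)"
proof -
  have "cmod (h 0) \<le> K"
    using assms(3) by (intro disc) simp
  then have "K \<ge> 0"
    using norm_ge_zero order_trans by blast
  have "K \<le> K * exp (c * cmod z)"
    using \<open>K \<ge> 0\<close> assms(4) by (simp add: mult_le_cancel_left1)
  show ?thesis
  proof (cases "cmod z \<le> R")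
    case True
    then show ?thesis
      using disc[OF True] \<open>K \<le> K * exp (c * cmod z)\<close> by linarith
  next
    case False
    have "h \<noteq> (\<lambda>z. 0)"
      using assms(2) by auto
    have "cmod (h z) \<le> cmod (h (of_real (cmod z)))"
      by (rule Lplus_norm_le_norm_of_real_norm[OF assms(1)])
    also have "\<dots> \<le> exp (c * (cmod z - R)) * cmod (h (of_real R))"
      using False by (intro Lplus_norm_of_real_le_exp[OF assms(1) \<open>h \<noteq> _\<close> assms(3) _ ratio]) simp
    also have "\<dots> \<le> exp (c * cmod z) * K"
      using disc[of "of_real R"] assms(3,4) \<open>K \<ge> 0\<close>
      by (intro mult_mono) (auto simp: mult_left_mono)
    finally show ?thesis
      by (simp add: mult.commute)
  qed
qed

text \<open>A perturbation of \<open>g\<close> by less than \<open>\<eta>\<close> on the disc keeps \<open>h 1\<close> away from zero and keeps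
  \<open>|h R| \<le> exp (c * (R - 1)) * |h 1|\<close>, thanks to the margin.\<close>
lemma Lplus_norm_le_of_close_on_disc:
  assumes "h \<in> Lplus" "1 < R" "c \<ge> 0"
    and close: "\<forall>w\<in>cball 0 R. cmod (h w - g w) < \<eta>"
    and g_disc: "\<And>w. cmod w \<le> R \<Longrightarrow> cmod (g w) \<le> M"
    and margin: "\<eta> * (1 + exp (c * (R - 1))) \<le> exp (c * (R - 1)) * cmod (g 1) - cmod (g (of_real R))"
  shows "cmod (h z) \<le> (M + \<eta>) * exp (c * cmod z)"
proof -
  define Q where "Q = exp (c * (R - 1))"
  have "Q > 0"
    by (simp add: Q_def)
  have near: "\<bar>cmod (h w) - cmod (g w)\<bar> \<le> \<eta>" if "cmod w \<le> R" for w
  proof -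
    have "cmod (h w - g w) < \<eta>"
      using close that by simp
    then show ?thesis
      using norm_triangle_ineq3[of "h w" "g w"] by linarith
  qed
  have "cmod (h 0 - g 0) < \<eta>"
    using close assms(2) by simp
  then have "\<eta> > 0"
    using norm_ge_zero[of "h 0 - g 0"] by linarith
  have "\<eta> * (1 + Q) \<le> Q * cmod (g 1)"
    using margin norm_ge_zero[of "g (of_real R)"] unfolding Q_def by linarith
  then have "Q * \<eta> < Q * cmod (g 1)"
    using \<open>\<eta> > 0\<close> by (simp add: algebra_simps)
  then have "\<eta> < cmod (g 1)"
    using \<open>Q > 0\<close> by simp
  have h1: "cmod (h 1) \<ge> cmod (g 1) - \<eta>"
    using near[of 1] assms(2) by simp
  then have "h 1 \<noteq> 0"
    using \<open>\<eta> < cmod (g 1)\<close> by auto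
  have "cmod (h (of_real R)) \<le> cmod (g (of_real R)) + \<eta>"
    using near[of "of_real R"] assms(2) by (simp add: abs_diff_le_iff)
  also have "\<dots> \<le> Q * (cmod (g 1) - \<eta>)"
    using margin by (simp add: Q_def algebra_simps)
  also have "\<dots> \<le> Q * cmod (h 1)"
    using h1 \<open>Q > 0\<close> by (simp add: mult_left_mono)
  finally have "cmod (h (of_real R)) \<le> exp (c * (R - 1)) * cmod (h 1)"
    by (simp add: Q_def)
  moreover have "cmod (h w) \<le> M + \<eta>" if "cmod w \<le> R" for w
    using near[OF that] g_disc[OF that] by (simp add: abs_diff_le_iff)
  ultimately show ?thesis
    by (intro Lplus_norm_le_of_disc_bound[OF assms(1) \<open>h 1 \<noteq> 0\<close> assms(2,3)])
qed

lemma exp_gap_radius: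
  fixes N p b c :: real
  assumes "N > 0" "p > 0" "b < c"
  obtains r where "r > 1" "N * exp (b * r) < exp (c * (r - 1)) * p"
proof -
  define r where "r = max 2 ((ln N - ln p + c) / (c - b) + 1)"
  have "(ln N - ln p + c) / (c - b) < r"
    unfolding r_def by linarith
  then have "ln N + b * r < c * (r - 1) + ln p"
    using assms(3) by (simp add: divide_less_eq algebra_simps)
  then have "exp (ln N + b * r) < exp (c * (r - 1) + ln p)"
    by simp
  then have "N * exp (b * r) < exp (c * (r - 1)) * p"
    using assms(1,2) by (simp add: exp_add)
  moreover have "r > 1"
    by (simp add: r_def)
  ultimately show thesis
    using that by blast
qed

text \<open>The radius \<open>r1\<close> is chosen so large that \<open>|g0 r1|\<close> lies strictly below
  \<open>exp (c * (r1 - 1)) * |g0 1|\<close>; the gap between the two provides the margin.\<close>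
lemma Lplus_uniform_exponential_bound:
  assumes "g0 holomorphic_on UNIV" "normb b1 g0 < \<infinity>" "0 < b1" "b1 < c" "g0 1 \<noteq> 0"
  obtains R \<eta> K
  where "\<And>h z. h \<in> Lplus \<Longrightarrow> (\<forall>w\<in>cball 0 R. cmod (h w - g0 w) < \<eta>) \<Longrightarrow>
           cmod (h z) \<le> K * exp (c * cmod z)"
    and "\<eta> > 0"
proof -
  obtain N where "N > 0" "\<And>k. cmod ((deriv ^^ k) g0 0) \<le> N * b1 ^ k"
    using normb_finite_imp_higher_deriv_le assms(2,3) by blast
  then have g0_bound: "cmod (g0 z) \<le> N * exp (b1 * cmod z)" for z
    using norm_le_exp_of_higher_deriv_le[OF assms(1)] assms(3) by simp
  have "cmod (g0 1) > 0"
    using assms(5) by simp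
  then obtain r1 where "r1 > 1" and gap: "N * exp (b1 * r1) < exp (c * (r1 - 1)) * cmod (g0 1)"
    by (rule exp_gap_radius[OF \<open>N > 0\<close> _ assms(4)]) (rule that)
  define Q where "Q = exp (c * (r1 - 1))"
  define \<eta> where "\<eta> = min 1 ((Q * cmod (g0 1) - cmod (g0 (of_real r1))) / (1 + Q))"
  have "\<eta> > 0"
    using g0_bound[of "of_real r1"] gap \<open>r1 > 1\<close> by (simp add: \<eta>_def Q_def add_pos_pos)
  have margin: "\<eta> * (1 + Q) \<le> Q * cmod (g0 1) - cmod (g0 (of_real r1))"
    by (simp add: \<eta>_def Q_def pos_le_divide_eq[symmetric] add_pos_pos)
  have g0_disc: "cmod (g0 w) \<le> N * exp (b1 * r1)" if "cmod w \<le> r1" for w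
  proof -
    have "exp (b1 * cmod w) \<le> exp (b1 * r1)"
      using that assms(3) by (simp add: mult_left_mono)
    then have "N * exp (b1 * cmod w) \<le> N * exp (b1 * r1)"
      using \<open>N > 0\<close> by simp
    then show ?thesis
      using g0_bound[of w] by linarith
  qed
  have "cmod (h z) \<le> (N * exp (b1 * r1) + 1) * exp (c * cmod z)"
    if "h \<in> Lplus" "\<forall>w\<in>cball 0 r1. cmod (h w - g0 w) < \<eta>" for h z
  proof -
    have "cmod (h z) \<le> (N * exp (b1 * r1) + \<eta>) * exp (c * cmod z)"
      using that g0_disc margin \<open>r1 > 1\<close> assms(3,4)
      by (intro Lplus_norm_le_of_close_on_disc) (auto simp: Q_def mult.commute)
    also have "\<dots> \<le> (N * exp (b1 * r1) + 1) * exp (c * cmod z)"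
      by (simp add: \<eta>_def)
    finally show ?thesis .
  qed
  from this \<open>\<eta> > 0\<close> show ?thesis
    by (rule that)
qed

lemma Lplus_normb_diff_le_of_close:
  assumes "g0 \<in> Lplus" "g0 \<noteq> (\<lambda>z. 0)" "g0 holomorphic_on UNIV"
    and "normb b1 g0 < \<infinity>" "0 < b1" "b1 < b" "\<epsilon> > 0"
  obtains R \<eta>
  where "\<And>g. g \<in> Lplus \<Longrightarrow> g holomorphic_on UNIV \<Longrightarrow>
           (\<forall>w\<in>cball 0 R. cmod (g w - g0 w) < \<eta>) \<Longrightarrow> normb b (\<lambda>z. g z - g0 z) \<le> ereal \<epsilon>"
    and "\<eta> > 0"
proof -
  define c where "c = (b1 + b) / 2"
  have c: "b1 < c" "c < b" "c > 0"
    using assms(5,6) by (simp_all add: c_def)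
  have "g0 1 \<noteq> 0"
    using Lplus_norm_of_real_pos[OF assms(1,2), of 1] by auto
  obtain R0 \<eta>0 K
    where growth: "\<And>h z. h \<in> Lplus \<Longrightarrow> (\<forall>w\<in>cball 0 R0. cmod (h w - g0 w) < \<eta>0) \<Longrightarrow>
                    cmod (h z) \<le> K * exp (c * cmod z)"
      and "\<eta>0 > 0"
    by (rule Lplus_uniform_exponential_bound[OF assms(3,4,5) c(1) \<open>g0 1 \<noteq> 0\<close>]) (rule that)
  have "(\<lambda>k. 2 * K * exp 1 * (real k * (c / b) ^ k)) \<longlonglongrightarrow> 2 * K * exp 1 * 0"
    using c by (intro tendsto_mult_left powser_times_n_limit_0) simp
  then have "eventually (\<lambda>k. 2 * K * exp 1 * (real k * (c / b) ^ k) < \<epsilon>) sequentially"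
    using assms(7) by (intro order_tendstoD(2)) auto
  then obtain k0 where k0: "\<And>k. k \<ge> k0 \<Longrightarrow> 2 * K * exp 1 * (real k * (c / b) ^ k) < \<epsilon>"
    unfolding eventually_sequentially by blast
  define S where "S = (\<Sum>k<max k0 1. fact k / b ^ k)"
  have "S \<ge> 0"
    unfolding S_def using c by (intro sum_nonneg) auto
  define \<eta> where "\<eta> = min \<eta>0 (\<epsilon> / (S + 1))"
  have "\<eta> > 0"
    using \<open>\<eta>0 > 0\<close> \<open>S \<ge> 0\<close> assms(7) by (simp add: \<eta>_def)
  have "normb b (\<lambda>z. g z - g0 z) \<le> ereal \<epsilon>"
    if "g \<in> Lplus" "g holomorphic_on UNIV" and close: "\<forall>w\<in>cball 0 (max R0 1). cmod (g w - g0 w) < \<eta>"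
    for g
  proof -
    define d where "d = (\<lambda>z. g z - g0 z)"
    have "d holomorphic_on UNIV"
      unfolding d_def using that(2) assms(3) by (intro holomorphic_intros)
    have "cmod (d z) \<le> 2 * K * exp (c * cmod z)" for z
    proof -
      have "cmod (g z) \<le> K * exp (c * cmod z)"
        using growth[OF that(1)] close \<open>\<eta>0 > 0\<close> by (simp add: \<eta>_def)
      moreover have "cmod (g0 z) \<le> K * exp (c * cmod z)"
        using growth[OF assms(1)] \<open>\<eta>0 > 0\<close> by simp
      ultimately show ?thesis
        using norm_triangle_ineq4[of "g z" "g0 z"] by (simp add: d_def)
    qed
    have "cmod ((deriv ^^ k) d 0) / b ^ k \<le> \<epsilon>" for k
    proof (cases "k < max k0 1")
      case True
      have "cmod (d w) \<le> \<eta>" if "cmod w \<le> 1" for w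
        using close that by (auto simp: d_def intro: less_imp_le)
      then have "cmod ((deriv ^^ k) d 0) \<le> fact k * \<eta> / 1 ^ k"
        using \<open>d holomorphic_on UNIV\<close>
        by (intro Cauchy_inequality)
           (auto intro: holomorphic_on_subset holomorphic_on_imp_continuous_on)
      then have "cmod ((deriv ^^ k) d 0) / b ^ k \<le> fact k / b ^ k * \<eta>"
        using c by (simp add: divide_right_mono)
      also have "\<dots> \<le> S * (\<epsilon> / (S + 1))"
        using True c \<open>\<eta> > 0\<close> \<open>S \<ge> 0\<close>
        by (intro mult_mono) (auto simp: S_def \<eta>_def intro: member_le_sum)
      also have "\<dots> \<le> \<epsilon>"
        using \<open>S \<ge> 0\<close> assms(7) by (simp add: field_simps)
      finally show ?thesis .
    next
      case False
      then have "cmod ((deriv ^^ k) d 0) \<le> 2 * K * exp 1 * real k * c ^ k"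
        using \<open>d holomorphic_on UNIV\<close> \<open>\<And>z. cmod (d z) \<le> _\<close> c
        by (intro higher_deriv_le_of_exponential_growth) auto
      then have "cmod ((deriv ^^ k) d 0) / b ^ k \<le> 2 * K * exp 1 * (real k * (c / b) ^ k)"
        using c by (simp add: divide_right_mono power_divide)
      also have "\<dots> \<le> \<epsilon>"
        using k0[of k] False by (simp add: less_imp_le)
      finally show ?thesis .
    qed
    then show ?thesis
      by (simp add: normb_le_ereal_iff d_def)
  qed
  from this \<open>\<eta> > 0\<close> show ?thesis
    by (rule that)
qed

section \<open>Continuity of the identity and compactness\<close>

lemma Lplus_a_D:
  assumes "g \<in> Lplus_a a"
  shows "g \<in> Lplus" "g holomorphic_on UNIV" "\<And>b. b > a \<Longrightarrow> normb b g < \<infinity>"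
  using assms by (auto simp: Lplus_a_def A_space_def)

lemma LU_topology_openin_cball_nhd:
  assumes "g0 holomorphic_on UNIV" "\<eta> > 0"
  shows "openin LU_topology {g. g holomorphic_on UNIV \<and> (\<forall>w\<in>cball 0 R. cmod (g w - g0 w) < \<eta>)}"
  unfolding LU_topology_def using assms
  by (intro topology_generated_by_Basis CollectI exI[of _ g0] exI[of _ "cball 0 R"] exI[of _ \<eta>]) auto

lemma LU_open_nhd_in_normb_ball:
  assumes "a \<ge> 0" "g0 \<in> Lplus_a a" "g0 \<noteq> (\<lambda>z. 0)" "f holomorphic_on UNIV" "b > a"
    and "normb b (\<lambda>z. g0 z - f z) < ereal r"
  obtains W where "openin LU_topology W" "g0 \<in> W"
    "\<And>g. g \<in> Lplus_a a \<Longrightarrow> g \<in> W \<Longrightarrow> normb b (\<lambda>z. g z - f z) < ereal r"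
proof -
  define b1 where "b1 = (a + b) / 2"
  have "a < b1" "0 < b1" "b1 < b"
    using assms(1,5) by (simp_all add: b1_def)
  obtain s where s: "normb b (\<lambda>z. g0 z - f z) < ereal s" "s < r"
    using ereal_dense2[OF assms(6)] by auto
  then have "r - s > 0"
    by simp
  obtain R \<eta>
    where close: "\<And>g. g \<in> Lplus \<Longrightarrow> g holomorphic_on UNIV \<Longrightarrow>
            (\<forall>w\<in>cball 0 R. cmod (g w - g0 w) < \<eta>) \<Longrightarrow> normb b (\<lambda>z. g z - g0 z) \<le> ereal (r - s)"
      and "\<eta> > 0"
    by (rule Lplus_normb_diff_le_of_close[OF Lplus_a_D(1)[OF assms(2)] assms(3) Lplus_a_D(2)[OF assms(2)]
          Lplus_a_D(3)[OF assms(2) \<open>a < b1\<close>] \<open>0 < b1\<close> \<open>b1 < b\<close> \<open>r - s > 0\<close>])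
      (rule that)
  define W where "W = {g. g holomorphic_on UNIV \<and> (\<forall>w\<in>cball 0 R. cmod (g w - g0 w) < \<eta>)}"
  have "openin LU_topology W"
    unfolding W_def using Lplus_a_D(2)[OF assms(2)] \<open>\<eta> > 0\<close> by (rule LU_topology_openin_cball_nhd)
  moreover have "g0 \<in> W"
    using Lplus_a_D(2)[OF assms(2)] \<open>\<eta> > 0\<close> by (simp add: W_def)
  moreover have "normb b (\<lambda>z. g z - f z) < ereal r" if "g \<in> Lplus_a a" "g \<in> W" for g
  proof -
    have "normb b (\<lambda>z. g z - f z) \<le> normb b (\<lambda>z. g z - g0 z) + normb b (\<lambda>z. g0 z - f z)"
      using Lplus_a_D(2)[OF that(1)] Lplus_a_D(2)[OF assms(2)] assms(1,4,5)
      by (intro normb_diff_triangle) auto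
    also have "\<dots> \<le> ereal (r - s) + normb b (\<lambda>z. g0 z - f z)"
      using close[OF Lplus_a_D(1,2)[OF that(1)]] that(2)
      by (intro add_right_mono) (auto simp: W_def)
    also have "\<dots> < ereal (r - s) + ereal s"
      using s(1) by (intro ereal_less_add) simp_all
    finally show ?thesis
      by simp
  qed
  ultimately show thesis
    by (rule that)
qed

lemma continuous_map_LU_topology_A_topology_id:
  assumes "a \<ge> 0" "B \<subseteq> Lplus_a a" "(\<lambda>z. 0) \<notin> B"
  shows "continuous_map (subtopology LU_topology B) (A_topology a) id"
  unfolding A_topology_def
proof (rule continuous_on_generated_topo)
  let ?S = "{{g \<in> A_space a. normb b (\<lambda>z. g z - f z) < ereal r} | f b r.
              f \<in> A_space a \<and> b > a \<and> r > 0}"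
  show "id ` topspace (subtopology LU_topology B) \<subseteq> \<Union> ?S"
  proof
    fix g assume "g \<in> id ` topspace (subtopology LU_topology B)"
    then have "g \<in> A_space a"
      using assms(2) by (auto simp: Lplus_a_def)
    moreover have "normb (a + 1) (\<lambda>z. g z - g z) = 0"
      by (simp add: normb_def zero_ereal_def)
    moreover have "{h \<in> A_space a. normb (a + 1) (\<lambda>z. h z - g z) < ereal 1} \<in> ?S"
      unfolding mem_Collect_eq using \<open>g \<in> A_space a\<close>
      by (intro exI[of _ g] exI[of _ "a + 1"] exI[of _ 1]) simp
    ultimately show "g \<in> \<Union> ?S"
      by (intro UnionI[of "{h \<in> A_space a. normb (a + 1) (\<lambda>z. h z - g z) < ereal 1}"]) auto
  qed
  fix U assume "U \<in> ?S"
  then obtain f b r where U: "U = {g \<in> A_space a. normb b (\<lambda>z. g z - f z) < ereal r}"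
    and "f \<in> A_space a" "b > a"
    by blast
  have "\<exists>T. openin (subtopology LU_topology B) T \<and> g0 \<in> T \<and> T \<subseteq> id -` U \<inter> topspace (subtopology LU_topology B)"
    if g0: "g0 \<in> id -` U \<inter> topspace (subtopology LU_topology B)" for g0
  proof -
    have "g0 \<in> B" and normb_g0: "normb b (\<lambda>z. g0 z - f z) < ereal r"
      using g0 U by auto
    then have "g0 \<in> Lplus_a a" "g0 \<noteq> (\<lambda>z. 0)"
      using assms(2,3) by auto
    moreover have "f holomorphic_on UNIV"
      using \<open>f \<in> A_space a\<close> by (simp add: A_space_def)
    ultimately obtain W where "openin LU_topology W" "g0 \<in> W"
      and W: "\<And>g. g \<in> Lplus_a a \<Longrightarrow> g \<in> W \<Longrightarrow> normb b (\<lambda>z. g z - f z) < ereal r"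
      by (rule LU_open_nhd_in_normb_ball[OF assms(1) _ _ _ \<open>b > a\<close> normb_g0]) (rule that)
    have "B \<inter> W \<subseteq> id -` U \<inter> topspace (subtopology LU_topology B)"
      using W assms(2) openin_subset[OF \<open>openin LU_topology W\<close>] by (auto simp: U Lplus_a_def)
    then show ?thesis
      using openin_subtopology_Int2[OF \<open>openin LU_topology W\<close>] \<open>g0 \<in> B\<close> \<open>g0 \<in> W\<close> by blast
  qed
  then show "openin (subtopology LU_topology B) (id -` U \<inter> topspace (subtopology LU_topology B))"
    by (subst openin_subopen) blast
qed

theorem corollary1p4:
  fixes a :: real and B :: "(complex \<Rightarrow> complex) set"
  assumes "a \<ge> 0"
    and "B \<subseteq> Lplus_a a"
    and "compactin LU_topology B"
    and "(\<lambda>z. 0) \<notin> B"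
  shows "compactin (A_topology a) B"
proof -
  have "compactin (subtopology LU_topology B) B"
    using assms(3) by (simp add: compactin_subtopology)
  then have "compactin (A_topology a) (id ` B)"
    using continuous_map_LU_topology_A_topology_id[OF assms(1,2,4)] by (rule image_compactin)
  then show ?thesis
    by simp
qed

end
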